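(* Let $A$ be an abelian surface over $\mathbb{C}$ admitting two different principal polarizations $\theta \neq \theta' \in \mathrm{NS}(A)$. Then $A$ admits real multiplication.
   Context: An abelian surface $A$ over $\mathbb{C}$ admits real multiplication if the ring $\mathrm{End}_{\mathbb{Q}}(A) = \mathrm{End}(A) \otimes_{\mathbb{Z}} \mathbb{Q}$ contains a subring isomorphic to $\mathbb{Q}(\sqrt{d})$ for some integer $d \geq 2$ that is not a square. *)

theory Defs
  imports "HOL-Analysis.Analysis"
begin

text \<open>Analytic (Appell--Humbert) model of complex abelian surfaces.
  V = C^2 is modelled as complex \<times> complex; a complex torus is V/L for a lattice L.\<close>

type_synonym cvec = "complex \<times> complex"

definition cscale :: "complex \<Rightarrow> cvec \<Rightarrow> cvec" where
  "cscale c v = (c * fst v, c * snd v)"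

definition is_lattice :: "cvec set \<Rightarrow> bool" where
  "is_lattice L \<longleftrightarrow> (\<exists>b :: nat \<Rightarrow> cvec. inj_on b {..<4} \<and> independent (b ` {..<4}) \<and>
      L = {(\<Sum>i<4. of_int (n i) *\<^sub>R b i) | n :: nat \<Rightarrow> int. True})"

definition hermitian_form :: "(cvec \<Rightarrow> cvec \<Rightarrow> complex) \<Rightarrow> bool" where
  "hermitian_form H \<longleftrightarrow>
     (\<forall>x x' y. H (x + x') y = H x y + H x' y) \<and>
     (\<forall>c x y. H (cscale c x) y = c * H x y) \<and>
     (\<forall>x y. H y x = cnj (H x y))"

text \<open>Neron--Severi group of V/L (Appell--Humbert): Hermitian forms H with Im H integral on L.\<close>
definition NS :: "cvec set \<Rightarrow> (cvec \<Rightarrow> cvec \<Rightarrow> complex) set" where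
  "NS L = {H. hermitian_form H \<and> (\<forall>x\<in>L. \<forall>y\<in>L. Im (H x y) \<in> \<int>)}"

definition positive_definite :: "(cvec \<Rightarrow> cvec \<Rightarrow> complex) \<Rightarrow> bool" where
  "positive_definite H \<longleftrightarrow> (\<forall>x. x \<noteq> 0 \<longrightarrow> Re (H x x) > 0)"

definition polarization :: "cvec set \<Rightarrow> (cvec \<Rightarrow> cvec \<Rightarrow> complex) \<Rightarrow> bool" where
  "polarization L H \<longleftrightarrow> H \<in> NS L \<and> positive_definite H"

text \<open>Principal polarization: a polarization whose alternating form E = Im H is unimodular
  on L, i.e. x \<mapsto> E(x,-) maps L onto Hom(L,Z) (polarization isogeny A \<rightarrow> A^ is an isomorphism).\<close>
definition principal_polarization :: "cvec set \<Rightarrow> (cvec \<Rightarrow> cvec \<Rightarrow> complex) \<Rightarrow> bool" where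
  "principal_polarization L H \<longleftrightarrow> polarization L H \<and>
     (\<forall>\<phi> :: cvec \<Rightarrow> real.
        (\<forall>x\<in>L. \<forall>y\<in>L. \<phi> (x + y) = \<phi> x + \<phi> y) \<and> (\<forall>x\<in>L. \<phi> x \<in> \<int>) \<longrightarrow>
        (\<exists>x\<in>L. \<forall>y\<in>L. \<phi> y = Im (H x y)))"

definition abelian_surface :: "cvec set \<Rightarrow> bool" where
  "abelian_surface L \<longleftrightarrow> is_lattice L \<and> (\<exists>H. polarization L H)"

definition latQ :: "cvec set \<Rightarrow> cvec set" where
  "latQ L = {x. \<exists>n::nat. n > 0 \<and> of_nat n *\<^sub>R x \<in> L}"

definition C_linear :: "(cvec \<Rightarrow> cvec) \<Rightarrow> bool" where
  "C_linear f \<longleftrightarrow> (\<forall>x y. f (x + y) = f x + f y) \<and> (\<forall>c x. f (cscale c x) = cscale c (f x))"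

text \<open>End_Q(A) = End(A) \<otimes> Q: C-linear maps of V preserving L \<otimes> Q.\<close>
definition EndQ :: "cvec set \<Rightarrow> (cvec \<Rightarrow> cvec) set" where
  "EndQ L = {f. C_linear f \<and> f ` latQ L \<subseteq> latQ L}"

text \<open>Q(sqrt d) modelled as Q \<times> Q, (a,b) = a + b sqrt d.\<close>
definition qd_mult :: "int \<Rightarrow> rat \<times> rat \<Rightarrow> rat \<times> rat \<Rightarrow> rat \<times> rat" where
  "qd_mult d x y = (fst x * fst y + of_int d * snd x * snd y, fst x * snd y + snd x * fst y)"

definition real_multiplication :: "cvec set \<Rightarrow> bool" where
  "real_multiplication L \<longleftrightarrow> (\<exists>d::int. d \<ge> 2 \<and> (\<nexists>k::int. d = k^2) \<and>
     (\<exists>\<iota> :: rat \<times> rat \<Rightarrow> (cvec \<Rightarrow> cvec).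
        (\<forall>z. \<iota> z \<in> EndQ L) \<and> inj \<iota> \<and> \<iota> (1, 0) = id \<and>
        (\<forall>z w. \<iota> (z + w) = (\<lambda>v. \<iota> z v + \<iota> w v)) \<and>
        (\<forall>z w. \<iota> (qd_mult d z w) = \<iota> z \<circ> \<iota> w)))"

end

theory Submission
  imports Defs
begin

text \<open>Write \<open>\<theta>' x y = \<theta> (\<alpha> x) y\<close> with \<open>\<alpha>\<close> \<open>\<complex>\<close>-linear. Then \<open>\<alpha>\<close> is \<open>\<theta>\<close>-self-adjoint and
  satisfies \<open>\<alpha>\<^sup>2 = s \<alpha> - t\<close> with real \<open>s, t\<close> (Cayley--Hamilton). Since \<open>Im \<theta>\<close> is unimodular on
  \<open>L\<close> and \<open>Im \<theta>'\<close> is integral there, \<open>\<alpha>\<close> maps \<open>L\<close> into \<open>L\<close>, and so does its inverse, which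
  relates \<open>\<theta>\<close> back to \<open>\<theta>'\<close>. Hence a lattice eigenvector of \<open>\<alpha>\<close> has eigenvalue 1: the
  eigenvalue is positive because \<open>\<theta>\<close> and \<open>\<theta>'\<close> are, and all its integral powers keep the
  vector in \<open>L\<close>. As \<open>\<theta> \<noteq> \<theta>'\<close>, \<open>\<alpha>\<close> is not a scalar, so \<open>s\<close> and \<open>t\<close> are rational (they are
  determined by the integral matrix of \<open>\<alpha>\<close>). The discriminant \<open>s\<^sup>2 - 4t = (2\<alpha> - s)\<^sup>2\<close> is
  nonnegative because \<open>2\<alpha> - s\<close> is self-adjoint, and it is not a rational square: otherwise
  both roots would be rational eigenvalues of \<open>\<alpha>\<close> on \<open>L\<close>, hence equal to 1, forcing
  \<open>\<alpha> = id\<close>. So \<open>2\<alpha> - s\<close> is a square root of a rational non-square in \<open>End\<^sub>\<rat>(A)\<close>.\<close>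

subsection \<open>Rational coefficients\<close>

lemma rational_nonsquare_scaled_to_int:
  fixes D :: real
  assumes "D \<in> \<rat>" "D \<ge> 0" "\<not> (\<exists>r\<in>\<rat>. D = r\<^sup>2)"
  obtains d q :: int where "q \<noteq> 0" "of_int d = (of_int q)\<^sup>2 * D" "d \<ge> 2"
    "\<not> (\<exists>c\<in>\<rat>. real_of_int d = c\<^sup>2)"
proof -
  obtain p q where "q > 0" "D = of_int p / of_int q" using assms(1) Rats_cases' by metis
  define d where "d = p * q"
  have d_eq: "of_int d = (of_int q)\<^sup>2 * D"
    using \<open>q > 0\<close> \<open>D = _\<close> by (simp add: d_def power2_eq_square)
  have nonsquare: "\<not> (\<exists>c\<in>\<rat>. real_of_int d = c\<^sup>2)"
  proof
    assume "\<exists>c\<in>\<rat>. real_of_int d = c\<^sup>2"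
    then obtain c where "c \<in> \<rat>" "real_of_int d = c\<^sup>2" by blast
    then have "D = (c / of_int q)\<^sup>2" using d_eq \<open>q > 0\<close> by (simp add: power_divide field_simps)
    then show False using assms(3) \<open>c \<in> \<rat>\<close> by auto
  qed
  have "real_of_int d \<ge> 0" using d_eq assms(2) by simp
  moreover have "real_of_int d \<noteq> 0\<^sup>2" "real_of_int d \<noteq> 1\<^sup>2"
    using nonsquare Rats_0 Rats_1 by blast+
  ultimately have "d \<ge> 2" by simp
  then show ?thesis using that[of q d] \<open>q > 0\<close> d_eq nonsquare by simp
qed

lemma rational_coeffs_of_nonscalar_relation:
  fixes m A :: "nat \<Rightarrow> nat \<Rightarrow> real"
  assumes rat: "\<And>i j. i < n \<Longrightarrow> j < n \<Longrightarrow> m i j \<in> \<rat> \<and> A i j \<in> \<rat>"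
    and rel: "\<And>i j. i < n \<Longrightarrow> j < n \<Longrightarrow> A i j = s * m i j - (if i = j then t else 0)"
    and nonscalar: "i < n" "j < n" "i \<noteq> j \<and> m i j \<noteq> 0 \<or> m i i \<noteq> m j j"
  shows "s \<in> \<rat> \<and> t \<in> \<rat>"
proof -
  have "s \<in> \<rat>"
  proof (cases "i \<noteq> j \<and> m i j \<noteq> 0")
    case True
    then have "s = A i j / m i j" using rel[of i j] nonscalar by simp
    then show ?thesis using rat[of i j] nonscalar by simp
  next
    case False
    then have "m i i \<noteq> m j j" using nonscalar(3) by blast
    moreover have "A i i - A j j = s * (m i i - m j j)"
      using rel[of i i] rel[of j j] nonscalar by (simp add: algebra_simps)
    ultimately have "s = (A i i - A j j) / (m i i - m j j)" by simp
    then show ?thesis using rat[of i i] rat[of j j] nonscalar by simp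
  qed
  moreover have "t = s * m i i - A i i" using rel[of i i] nonscalar by simp
  ultimately show ?thesis using rat[of i i] nonscalar by simp
qed

subsection \<open>Hermitian forms on \<open>\<complex>\<^sup>2\<close>\<close>

lemma scaleR_eq_cscale: "r *\<^sub>R v = cscale (of_real r) v"
  by (cases v) (simp add: cscale_def scaleR_conv_of_real)

lemma positive_definiteD: "positive_definite H \<Longrightarrow> x \<noteq> 0 \<Longrightarrow> Re (H x x) > 0"
  unfolding positive_definite_def by blast

context
  fixes H :: "cvec \<Rightarrow> cvec \<Rightarrow> complex"
  assumes H: "hermitian_form H"
begin

lemma hermitian_form_add_left: "H (x + x') y = H x y + H x' y"
  using H unfolding hermitian_form_def by blast

lemma hermitian_form_cscale_left: "H (cscale c x) y = c * H x y"
  using H unfolding hermitian_form_def by blast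

lemma hermitian_form_commute: "H y x = cnj (H x y)"
  using H unfolding hermitian_form_def by blast

lemma hermitian_form_add_right: "H x (y + y') = H x y + H x y'"
  by (metis hermitian_form_add_left hermitian_form_commute complex_cnj_add)

lemma hermitian_form_cscale_right: "H x (cscale c y) = cnj c * H x y"
  by (metis hermitian_form_cscale_left hermitian_form_commute complex_cnj_mult complex_cnj_cnj)

lemma hermitian_form_diff_left: "H (x - x') y = H x y - H x' y"
  using hermitian_form_add_left[of "x - x'" x' y] by simp

lemma hermitian_form_diff_right: "H x (y - y') = H x y - H x y'"
  using hermitian_form_add_right[of x "y - y'" y'] by simp

lemma hermitian_form_zero_left: "H 0 y = 0"
  using hermitian_form_diff_left[of 0 0 y] by simp

lemma hermitian_form_scaleR_left: "H (r *\<^sub>R x) y = of_real r * H x y"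
  by (simp add: scaleR_eq_cscale hermitian_form_cscale_left)

lemma hermitian_form_scaleR_right: "H x (r *\<^sub>R y) = of_real r * H x y"
  by (simp add: scaleR_eq_cscale hermitian_form_cscale_right)

lemma hermitian_form_diag_real: "cnj (H x x) = H x x"
  by (metis hermitian_form_commute)

lemma hermitian_form_coordinates:
  "H x y = fst x * cnj (fst y) * H (1,0) (1,0) + fst x * cnj (snd y) * H (1,0) (0,1)
     + snd x * cnj (fst y) * H (0,1) (1,0) + snd x * cnj (snd y) * H (0,1) (0,1)"
proof -
  have "v = cscale (fst v) (1,0) + cscale (snd v) (0,1)" for v
    by (cases v) (simp add: cscale_def)
  then have "H x y = H (cscale (fst x) (1,0) + cscale (snd x) (0,1))
                       (cscale (fst y) (1,0) + cscale (snd y) (0,1))"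
    by simp
  then show ?thesis
    by (simp add: hermitian_form_add_left hermitian_form_add_right hermitian_form_cscale_left
        hermitian_form_cscale_right algebra_simps)
qed

context
  assumes P: "positive_definite H"
begin

lemma positive_definite_Im_nondegenerate:
  assumes "\<And>y. Im (H w y) = 0"
  shows "w = 0"
proof (rule ccontr)
  assume "w \<noteq> 0"
  then have "Re (H w w) > 0" by (rule positive_definiteD[OF P])
  moreover have "Im (H w (cscale \<i> w)) = - Re (H w w)"
    by (simp add: hermitian_form_cscale_right)
  ultimately show False using assms by auto
qed

lemma positive_definite_gram_det_nonzero:
  "H (1,0) (1,0) * H (0,1) (0,1) - H (0,1) (1,0) * H (1,0) (0,1) \<noteq> 0"
proof
  let ?h11 = "H (1,0) (1,0)" and ?h12 = "H (1,0) (0,1)" and ?h21 = "H (0,1) (1,0)"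
    and ?h22 = "H (0,1) (0,1)"
  assume det: "?h11 * ?h22 - ?h21 * ?h12 = 0"
  have "Re ?h11 > 0" using positive_definiteD[OF P, of "(1,0)"] by (simp add: zero_prod_def)
  define x where "x = (- ?h21, ?h11)"
  have "x \<noteq> 0" using \<open>Re ?h11 > 0\<close> by (auto simp: x_def zero_prod_def)
  then have "Re (H x x) > 0" by (rule positive_definiteD[OF P])
  moreover have "cnj ?h21 = ?h12" by (metis hermitian_form_commute complex_cnj_cnj)
  then have "H x x = ?h11 * (?h11 * ?h22 - ?h21 * ?h12)"
    unfolding hermitian_form_coordinates[of x x]
    by (simp add: x_def hermitian_form_diag_real algebra_simps)
  ultimately show False using det by simp
qed

end

end

lemma hermitian_form_relative_matrix:
  assumes H1: "hermitian_form H1" and H2: "hermitian_form H2" and P1: "positive_definite H1"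
  obtains a b c d where "\<And>x y. H2 x y = H1 (a * fst x + b * snd x, c * fst x + d * snd x) y"
    and "cnj (a + d) = a + d" and "cnj (a * d - b * c) = a * d - b * c"
proof -
  define h11 h12 h21 h22 where "h11 = H1 (1,0) (1,0)" and "h12 = H1 (1,0) (0,1)"
    and "h21 = H1 (0,1) (1,0)" and "h22 = H1 (0,1) (0,1)"
  define g11 g12 g21 g22 where "g11 = H2 (1,0) (1,0)" and "g12 = H2 (1,0) (0,1)"
    and "g21 = H2 (0,1) (1,0)" and "g22 = H2 (0,1) (0,1)"
  define D where "D = h11 * h22 - h21 * h12"
  have "D \<noteq> 0"
    using positive_definite_gram_det_nonzero[OF H1 P1] by (simp add: D_def h11_def h12_def h21_def h22_def)
  \<comment> \<open>Cramer's rule for the linear system \<open>H1 (\<alpha> e\<^sub>i) e\<^sub>j = H2 e\<^sub>i e\<^sub>j\<close>\<close>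
  define a b c d where "a = (g11 * h22 - g12 * h21) / D" and "b = (g21 * h22 - g22 * h21) / D"
    and "c = (g12 * h11 - g11 * h12) / D" and "d = (g22 * h11 - g21 * h12) / D"
  have row1: "(a * x1 + b * x2) * h11 + (c * x1 + d * x2) * h21 = x1 * g11 + x2 * g21" for x1 x2
    using \<open>D \<noteq> 0\<close> unfolding a_def b_def c_def d_def D_def
    by (simp add: divide_simps) (simp add: algebra_simps)
  have row2: "(a * x1 + b * x2) * h12 + (c * x1 + d * x2) * h22 = x1 * g12 + x2 * g22" for x1 x2
    using \<open>D \<noteq> 0\<close> unfolding a_def b_def c_def d_def D_def
    by (simp add: divide_simps) (simp add: algebra_simps)
  have "H1 (a * fst x + b * snd x, c * fst x + d * snd x) y = H2 x y" for x y
  proof -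
    have "H1 (a * fst x + b * snd x, c * fst x + d * snd x) y
        = cnj (fst y) * ((a * fst x + b * snd x) * h11 + (c * fst x + d * snd x) * h21)
          + cnj (snd y) * ((a * fst x + b * snd x) * h12 + (c * fst x + d * snd x) * h22)"
      unfolding hermitian_form_coordinates[OF H1, of _ y]
      by (simp add: h11_def h12_def h21_def h22_def algebra_simps)
    also have "\<dots> = H2 x y"
      unfolding row1 row2 hermitian_form_coordinates[OF H2, of x y]
      by (simp add: g11_def g12_def g21_def g22_def algebra_simps)
    finally show ?thesis .
  qed
  moreover have diag: "cnj h11 = h11" "cnj h22 = h22" "cnj g11 = g11" "cnj g22 = g22"
    using hermitian_form_diag_real[OF H1] hermitian_form_diag_real[OF H2]
    by (auto simp: h11_def h22_def g11_def g22_def)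
  have offdiag: "cnj h21 = h12" "cnj g21 = g12" "cnj h12 = h21" "cnj g12 = g21"
    using hermitian_form_commute[OF H1, of "(1,0)" "(0,1)"] hermitian_form_commute[OF H2, of "(1,0)" "(0,1)"]
    by (auto simp: h12_def h21_def g12_def g21_def)
  have "cnj D = D" by (simp add: D_def diag offdiag mult.commute)
  then have "cnj (a + d) = a + d"
    unfolding a_def d_def by (simp add: diag offdiag add_divide_distrib[symmetric] algebra_simps)
  moreover have "a * d - b * c = (g11 * g22 - g21 * g12) / D"
    using \<open>D \<noteq> 0\<close> unfolding a_def b_def c_def d_def D_def
    by (simp add: divide_simps) (simp add: algebra_simps)
  then have "cnj (a * d - b * c) = a * d - b * c"
    by (simp add: diag offdiag \<open>cnj D = D\<close> mult.commute)
  ultimately show ?thesis using that by metis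
qed

lemma hermitian_form_relative_map:
  assumes "hermitian_form H1" "hermitian_form H2" "positive_definite H1"
  obtains \<alpha> and s t :: real where "C_linear \<alpha>" "\<And>x y. H2 x y = H1 (\<alpha> x) y"
    and "\<And>x. \<alpha> (\<alpha> x) = s *\<^sub>R \<alpha> x - t *\<^sub>R x"
proof -
  obtain a b c d where rep: "\<And>x y. H2 x y = H1 (a * fst x + b * snd x, c * fst x + d * snd x) y"
    and tr: "cnj (a + d) = a + d" and det: "cnj (a * d - b * c) = a * d - b * c"
    using hermitian_form_relative_matrix[OF assms] by blast
  have "\<exists>r. z = of_real r" if "cnj z = z" for z
    using that by (metis Reals_cases Reals_cnj_iff)
  then obtain s t where s: "a + d = of_real s" and t: "a * d - b * c = of_real t"
    using tr det by meson
  define \<alpha> where "\<alpha> x = (a * fst x + b * snd x, c * fst x + d * snd x)" for x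
  have "C_linear \<alpha>" by (auto simp: C_linear_def \<alpha>_def cscale_def algebra_simps)
  moreover have "\<alpha> (\<alpha> x) = s *\<^sub>R \<alpha> x - t *\<^sub>R x" for x
    \<comment> \<open>Cayley--Hamilton\<close>
    by (simp add: \<alpha>_def prod_eq_iff scaleR_conv_of_real s[symmetric] t[symmetric] algebra_simps)
  ultimately show ?thesis using that rep unfolding \<alpha>_def by blast
qed

lemma C_linear_add: "C_linear f \<Longrightarrow> f (x + y) = f x + f y"
  unfolding C_linear_def by blast

lemma C_linear_scaleR: "C_linear f \<Longrightarrow> f (r *\<^sub>R x) = r *\<^sub>R f x"
  unfolding C_linear_def scaleR_eq_cscale by blast

lemma C_linear_diff: "C_linear f \<Longrightarrow> f (x - y) = f x - f y"
  using C_linear_add[of f "x - y" y] by (simp add: eq_diff_eq)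

lemma C_linear_id: "C_linear id"
  by (simp add: C_linear_def)

lemma C_linear_lincomb:
  assumes "C_linear f" "C_linear g"
  shows "C_linear (\<lambda>v. r *\<^sub>R f v + r' *\<^sub>R g v)"
proof -
  have cs: "cscale c (r *\<^sub>R v) = r *\<^sub>R cscale c v" "cscale c (u + v) = cscale c u + cscale c v"
    for c u v r
    by (simp_all add: cscale_def scaleR_conv_of_real algebra_simps)
  show ?thesis using assms unfolding C_linear_def by (simp add: cs algebra_simps)
qed

lemma sqrt_map_no_rational_eigenvector:
  assumes "C_linear \<beta>" "\<And>v. \<beta> (\<beta> v) = of_int d *\<^sub>R v" "\<not> (\<exists>c\<in>\<rat>. real_of_int d = c\<^sup>2)"
    and "c \<in> \<rat>" "v \<noteq> 0"
  shows "\<beta> v \<noteq> c *\<^sub>R v"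
proof
  assume "\<beta> v = c *\<^sub>R v"
  then have "\<beta> (\<beta> v) = c\<^sup>2 *\<^sub>R v" using C_linear_scaleR[OF assms(1)] by (simp add: power2_eq_square)
  then have "(real_of_int d - c\<^sup>2) *\<^sub>R v = 0" using assms(2)[of v] by (simp add: scaleR_diff_left)
  then have "real_of_int d = c\<^sup>2" using \<open>v \<noteq> 0\<close> by simp
  then show False using assms(3,4) by blast
qed

subsection \<open>Lattices with a basis\<close>

locale lattice_basis =
  fixes L :: "cvec set" and b :: "nat \<Rightarrow> cvec"
  assumes inj_basis: "inj_on b {..<4}" and independent_basis: "independent (b ` {..<4})"
    and lattice_eq: "L = {(\<Sum>i<4. of_int (n i) *\<^sub>R b i) | n :: nat \<Rightarrow> int. True}"
begin

lemma span_basis: "span (b ` {..<4}) = UNIV"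
proof -
  have "card (b ` {..<4}) = 4" using inj_basis by (simp add: card_image)
  then show ?thesis using card_eq_dim[of "b ` {..<4}" UNIV] independent_basis
    by (simp add: span_eq_iff[symmetric] dim_UNIV subset_antisym)
qed

definition coord :: "nat \<Rightarrow> cvec \<Rightarrow> real" where
  "coord j v = representation (b ` {..<4}) v (b j)"

lemma coord_add: "coord j (u + v) = coord j u + coord j v"
  unfolding coord_def using representation_add[OF independent_basis] span_basis by simp

lemma coord_diff: "coord j (u - v) = coord j u - coord j v"
  unfolding coord_def using representation_diff[OF independent_basis] span_basis by simp

lemma coord_scaleR: "coord j (r *\<^sub>R v) = r * coord j v"
  unfolding coord_def using representation_scale[OF independent_basis] span_basis by simp

lemma coord_basis: "i < 4 \<Longrightarrow> j < 4 \<Longrightarrow> coord j (b i) = (if i = j then 1 else 0)"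
  unfolding coord_def using representation_basis[OF independent_basis, of "b i"] inj_basis
  by (auto simp: inj_on_eq_iff)

lemma sum_coord_basis: "(\<Sum>j<4. coord j v *\<^sub>R b j) = v"
proof -
  have "(\<Sum>x\<in>b ` {..<4}. representation (b ` {..<4}) v x *\<^sub>R x) = v"
    using sum_representation_eq[OF independent_basis, of v] span_basis by simp
  then show ?thesis unfolding coord_def by (simp add: sum.reindex[OF inj_basis])
qed

lemma linear_coord: "linear (coord j)"
  by (simp add: linearI coord_add coord_scaleR)

lemma mem_lattice_iff_coord_Ints: "v \<in> L \<longleftrightarrow> (\<forall>j<4. coord j v \<in> \<int>)"
proof (intro iffI allI impI)
  fix j :: nat assume "v \<in> L" "j < 4"
  then obtain n where v: "v = (\<Sum>i<4. of_int (n i) *\<^sub>R b i)" using lattice_eq by auto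
  have "coord j v = (\<Sum>i<4. of_int (n i) * coord j (b i))"
    unfolding v by (simp add: linear_sum[OF linear_coord] coord_scaleR)
  also have "\<dots> = (\<Sum>i<4. if i = j then of_int (n j) else 0)"
    by (rule sum.cong) (use \<open>j < 4\<close> coord_basis in auto)
  also have "\<dots> = of_int (n j)" using \<open>j < 4\<close> by simp
  finally show "coord j v \<in> \<int>" by simp
next
  assume "\<forall>j<4. coord j v \<in> \<int>"
  define n where "n j = (SOME k. coord j v = of_int k)" for j
  have "coord j v = of_int (n j)" if "j < 4" for j
    using \<open>\<forall>j<4. _\<close> that unfolding n_def by (auto elim!: Ints_cases intro: someI)
  then have "(\<Sum>j<4. coord j v *\<^sub>R b j) = (\<Sum>i<4. of_int (n i) *\<^sub>R b i)"
    by (intro sum.cong) auto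
  then show "v \<in> L" using sum_coord_basis[of v] lattice_eq by auto
qed

lemma lattice_add: "u \<in> L \<Longrightarrow> v \<in> L \<Longrightarrow> u + v \<in> L"
  by (simp add: mem_lattice_iff_coord_Ints coord_add)

lemma lattice_diff: "u \<in> L \<Longrightarrow> v \<in> L \<Longrightarrow> u - v \<in> L"
  by (simp add: mem_lattice_iff_coord_Ints coord_diff)

lemma lattice_Ints_scaleR: "u \<in> L \<Longrightarrow> k \<in> \<int> \<Longrightarrow> k *\<^sub>R u \<in> L"
  by (simp add: mem_lattice_iff_coord_Ints coord_scaleR)

lemma basis_in_lattice: "i < 4 \<Longrightarrow> b i \<in> L"
  by (simp add: mem_lattice_iff_coord_Ints coord_basis)

lemma basis_nonzero: "i < 4 \<Longrightarrow> b i \<noteq> 0"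
  using independent_basis real_vector.dependent_zero[of "b ` {..<4}"] by auto

lemma linear_eq_0_if_basis:
  assumes "linear f" "\<And>i. i < 4 \<Longrightarrow> f (b i) = 0"
  shows "f v = 0"
proof (rule real_vector.linear_eq_0_on_span[OF \<open>linear f\<close>])
  show "f x = 0" if "x \<in> b ` {..<4}" for x using that assms(2) by blast
qed (simp add: span_basis)

lemma contracting_powers_leave_lattice:
  assumes "y \<noteq> 0" "0 < x" "x < 1"
  shows "\<exists>k. x ^ k *\<^sub>R y \<notin> L"
proof -
  have "\<exists>j<4. coord j y \<noteq> 0"
  proof (rule ccontr)
    assume "\<not> ?thesis"
    then have "y = 0" using sum_coord_basis[of y] by simp
    then show False using \<open>y \<noteq> 0\<close> by simp
  qed
  then obtain j where "j < 4" and n: "coord j y \<noteq> 0" by blast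
  obtain k where "x ^ k < 1 / \<bar>coord j y\<bar>"
    using real_arch_pow_inv[of "1 / \<bar>coord j y\<bar>" x] \<open>x < 1\<close> n by auto
  then have "\<bar>x ^ k * coord j y\<bar> < 1" "x ^ k * coord j y \<noteq> 0"
    using n \<open>0 < x\<close> by (simp_all add: abs_mult field_simps)
  then have "x ^ k * coord j y \<notin> \<int>" using Ints_nonzero_abs_ge1 by fastforce
  then show ?thesis using \<open>j < 4\<close> by (auto simp: mem_lattice_iff_coord_Ints coord_scaleR)
qed

lemma lattice_eigenvalue_eq_1:
  assumes "y \<noteq> 0" "l > 0"
    and "\<And>k. l ^ k *\<^sub>R y \<in> L" and "\<And>k. inverse l ^ k *\<^sub>R y \<in> L"
  shows "l = 1"
proof (rule ccontr)
  assume "l \<noteq> 1"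
  then consider "l < 1" | "inverse l < 1"
    using \<open>l > 0\<close> by (metis inverse_less_1_iff linorder_neqE_linordered_idom)
  then show False
  proof cases
    case 1
    then show False using contracting_powers_leave_lattice[of y l] assms by blast
  next
    case 2
    then show False using contracting_powers_leave_lattice[of y "inverse l"] assms by simp
  qed
qed

lemma eigenvector_powers_in_lattice:
  assumes "C_linear f" "\<And>x. x \<in> L \<Longrightarrow> f x \<in> L" "y \<in> L" "f y = l *\<^sub>R y"
  shows "l ^ k *\<^sub>R y \<in> L"
proof (induction k)
  case (Suc k)
  have "f (l ^ k *\<^sub>R y) = l ^ Suc k *\<^sub>R y"
    using assms(4) by (simp add: C_linear_scaleR[OF assms(1)] mult.commute)
  then show ?case using assms(2)[OF Suc] by simp
qed (simp add: assms(3))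

lemma latQ_add:
  assumes "x \<in> latQ L" "y \<in> latQ L" shows "x + y \<in> latQ L"
proof -
  obtain n where n: "n > 0" "real n *\<^sub>R x \<in> L" using assms(1) unfolding latQ_def by auto
  obtain m where m: "m > 0" "real m *\<^sub>R y \<in> L" using assms(2) unfolding latQ_def by auto
  have "real (n * m) *\<^sub>R (x + y) = real m *\<^sub>R (real n *\<^sub>R x) + real n *\<^sub>R (real m *\<^sub>R y)"
    by (simp add: algebra_simps)
  also have "\<dots> \<in> L"
    by (rule lattice_add; rule lattice_Ints_scaleR) (use n m in simp_all)
  finally show ?thesis using n m unfolding latQ_def by (intro CollectI exI[of _ "n * m"]) simp
qed

lemma latQ_Rats_scaleR:
  assumes "x \<in> latQ L" "r \<in> \<rat>" shows "r *\<^sub>R x \<in> latQ L"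
proof -
  obtain n where n: "n > 0" "real n *\<^sub>R x \<in> L" using assms(1) unfolding latQ_def by auto
  obtain a c where ac: "c > 0" "r = of_int a / of_int c" using assms(2) Rats_cases' by metis
  have "real (n * nat c) *\<^sub>R (r *\<^sub>R x) = of_int a *\<^sub>R (real n *\<^sub>R x)"
    using ac by (simp add: field_simps)
  also have "\<dots> \<in> L" by (rule lattice_Ints_scaleR) (use n in simp_all)
  finally show ?thesis using n ac unfolding latQ_def by (intro CollectI exI[of _ "n * nat c"]) simp
qed

lemma latQ_diff: "x \<in> latQ L \<Longrightarrow> y \<in> latQ L \<Longrightarrow> x - y \<in> latQ L"
  using latQ_add[of x "(-1) *\<^sub>R y"] latQ_Rats_scaleR[of y "-1"] by simp

lemma latQ_image:
  assumes "C_linear f" "\<And>v. v \<in> L \<Longrightarrow> f v \<in> L" "x \<in> latQ L"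
  shows "f x \<in> latQ L"
proof -
  obtain n where n: "n > 0" "real n *\<^sub>R x \<in> L" using assms(3) unfolding latQ_def by auto
  have "real n *\<^sub>R f x \<in> L" using assms(2)[OF n(2)] C_linear_scaleR[OF assms(1)] by simp
  then show ?thesis using n unfolding latQ_def by auto
qed

lemma principal_polarization_relative_map_closed:
  assumes P: "principal_polarization L H1" and H2: "H2 \<in> NS L"
    and rep: "\<And>x y. H2 x y = H1 (\<alpha> x) y" and "x \<in> L"
  shows "\<alpha> x \<in> L"
proof -
  have H1: "hermitian_form H1" and pd: "positive_definite H1"
    using P by (auto simp: principal_polarization_def polarization_def NS_def)
  have "hermitian_form H2" "\<forall>x\<in>L. \<forall>y\<in>L. Im (H2 x y) \<in> \<int>" using H2 by (auto simp: NS_def)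
  then have additive: "(\<forall>u\<in>L. \<forall>v\<in>L. Im (H2 x (u + v)) = Im (H2 x u) + Im (H2 x v))
      \<and> (\<forall>u\<in>L. Im (H2 x u) \<in> \<int>)"
    using \<open>x \<in> L\<close> by (simp add: hermitian_form_add_right)
  have unimodular: "\<And>\<phi>. (\<forall>x\<in>L. \<forall>y\<in>L. \<phi> (x + y) = \<phi> x + \<phi> y) \<and> (\<forall>x\<in>L. \<phi> x \<in> \<int>)
      \<Longrightarrow> \<exists>x\<in>L. \<forall>y\<in>L. \<phi> y = Im (H1 x y)"
    using P unfolding principal_polarization_def by blast
  obtain x' where "x' \<in> L" and x': "\<forall>y\<in>L. Im (H2 x y) = Im (H1 x' y)"
    using unimodular[of "\<lambda>y. Im (H2 x y)", OF additive] by blast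
  have "Im (H1 (\<alpha> x - x') y) = 0" for y
  proof (rule linear_eq_0_if_basis)
    show "linear (\<lambda>y. Im (H1 (\<alpha> x - x') y))"
      by (rule linearI) (simp_all add: hermitian_form_add_right[OF H1] hermitian_form_scaleR_right[OF H1])
    show "Im (H1 (\<alpha> x - x') (b i)) = 0" if "i < 4" for i
      using x' basis_in_lattice[OF that] by (simp add: hermitian_form_diff_left[OF H1] rep[symmetric])
  qed
  then have "\<alpha> x - x' = 0" by (rule positive_definite_Im_nondegenerate[OF H1 pd])
  then show ?thesis using \<open>x' \<in> L\<close> by simp
qed

lemma real_multiplication_of_sqrt_map:
  assumes lin: "C_linear \<beta>" and closed: "\<And>x. x \<in> latQ L \<Longrightarrow> \<beta> x \<in> latQ L"
    and sq: "\<And>v. \<beta> (\<beta> v) = of_int d *\<^sub>R v"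
    and d: "d \<ge> 2" and nonsquare: "\<not> (\<exists>c\<in>\<rat>. real_of_int d = c\<^sup>2)"
  shows "real_multiplication L"
proof -
  define \<iota> where "\<iota> z v = of_rat (fst z) *\<^sub>R v + of_rat (snd z) *\<^sub>R \<beta> v"
    for z :: "rat \<times> rat" and v
  have "\<iota> z \<in> EndQ L" for z
  proof -
    have "\<iota> z x \<in> latQ L" if "x \<in> latQ L" for x
      unfolding \<iota>_def by (intro latQ_add latQ_Rats_scaleR closed that) simp_all
    moreover have "C_linear (\<iota> z)"
      using C_linear_lincomb[OF C_linear_id lin] by (simp add: \<iota>_def[abs_def])
    ultimately show ?thesis unfolding EndQ_def by blast
  qed
  moreover have "inj \<iota>"
  proof (rule injI)
    fix z w assume "\<iota> z = \<iota> w"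
    have eq: "of_rat (fst z - fst w) *\<^sub>R v = of_rat (snd w - snd z) *\<^sub>R \<beta> v" for v
      using fun_cong[OF \<open>\<iota> z = \<iota> w\<close>, of v]
      by (simp add: \<iota>_def of_rat_diff scaleR_diff_left algebra_simps)
    have "snd z = snd w"
    proof (rule ccontr)
      assume "snd z \<noteq> snd w"
      define c :: real where "c = of_rat (fst z - fst w) / of_rat (snd w - snd z)"
      have "of_rat (snd w - snd z) \<noteq> (0::real)" using \<open>snd z \<noteq> snd w\<close> by simp
      then have "\<beta> (1, 0) = inverse (of_rat (snd w - snd z)) *\<^sub>R (of_rat (snd w - snd z) *\<^sub>R \<beta> (1, 0))"
        by simp
      also have "\<dots> = c *\<^sub>R (1, 0)" by (simp only: eq[symmetric] scaleR_scaleR c_def divide_inverse_commute)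
      finally show False
        using sqrt_map_no_rational_eigenvector[OF lin sq nonsquare, of c "(1, 0)"]
        by (simp add: c_def zero_prod_def)
    qed
    moreover have "fst z = fst w"
      using eq[of "(1, 0)"] \<open>snd z = snd w\<close> by (simp add: zero_prod_def)
    ultimately show "z = w" by (simp add: prod_eq_iff)
  qed
  moreover have "\<iota> (1, 0) = id" by (rule ext) (simp add: \<iota>_def)
  moreover have "\<iota> (z + w) = (\<lambda>v. \<iota> z v + \<iota> w v)" for z w
    by (rule ext) (simp add: \<iota>_def of_rat_add algebra_simps)
  moreover have "\<iota> (qd_mult d z w) = \<iota> z \<circ> \<iota> w" for z w
    by (rule ext) (simp add: \<iota>_def qd_mult_def C_linear_add[OF lin] C_linear_scaleR[OF lin] sq
        of_rat_add of_rat_mult algebra_simps)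
  moreover have "\<nexists>k::int. d = k\<^sup>2"
  proof
    assume "\<exists>k::int. d = k\<^sup>2"
    then obtain k :: int where "of_int d = (of_int k :: real)\<^sup>2" by auto
    then show False using nonsquare Rats_of_int by blast
  qed
  ultimately show ?thesis unfolding real_multiplication_def using d by blast
qed

end

subsection \<open>Two principal polarizations\<close>

locale polarization_pair = lattice_basis +
  fixes \<theta> \<theta>' :: "cvec \<Rightarrow> cvec \<Rightarrow> complex" and \<alpha> \<alpha>' :: "cvec \<Rightarrow> cvec" and s t :: real
  assumes herm: "hermitian_form \<theta>" and herm': "hermitian_form \<theta>'"
    and pos: "positive_definite \<theta>" and pos': "positive_definite \<theta>'"
    and lin: "C_linear \<alpha>" and lin': "C_linear \<alpha>'"
    and rep: "\<And>x y. \<theta>' x y = \<theta> (\<alpha> x) y" and rep': "\<And>x y. \<theta> x y = \<theta>' (\<alpha>' x) y"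
    and closed: "\<And>x. x \<in> L \<Longrightarrow> \<alpha> x \<in> L" and closed': "\<And>x. x \<in> L \<Longrightarrow> \<alpha>' x \<in> L"
    and quadratic: "\<And>x. \<alpha> (\<alpha> x) = s *\<^sub>R \<alpha> x - t *\<^sub>R x"
    and distinct: "\<theta> \<noteq> \<theta>'"
begin

lemma inverse_left: "\<alpha>' (\<alpha> x) = x"
proof -
  have "\<theta>' (\<alpha>' (\<alpha> x) - x) y = 0" for y
    by (simp add: hermitian_form_diff_left[OF herm'] rep'[of "\<alpha> x" y, symmetric] rep[of x y])
  then have "\<alpha>' (\<alpha> x) - x = 0" by (intro positive_definite_Im_nondegenerate[OF herm' pos']) simp
  then show ?thesis by simp
qed

lemma self_adjoint: "\<theta> (\<alpha> x) y = \<theta> x (\<alpha> y)"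
  by (metis rep hermitian_form_commute[OF herm] hermitian_form_commute[OF herm'])

lemma not_id: "\<exists>v. \<alpha> v \<noteq> v"
proof (rule ccontr)
  assume "\<not> ?thesis"
  then have "\<theta>' = \<theta>" by (simp add: fun_eq_iff rep)
  then show False using distinct by simp
qed

lemma lattice_eigenvalue:
  assumes "y \<in> L" "y \<noteq> 0" "\<alpha> y = l *\<^sub>R y"
  shows "l = 1"
proof (rule lattice_eigenvalue_eq_1[OF assms(2)])
  have "Re (\<theta>' y y) > 0" "Re (\<theta> y y) > 0"
    using positive_definiteD[OF pos] positive_definiteD[OF pos'] \<open>y \<noteq> 0\<close> by auto
  moreover have "\<theta>' y y = of_real l * \<theta> y y"
    using rep assms(3) by (simp add: hermitian_form_scaleR_left[OF herm])
  ultimately show "l > 0" by (simp add: zero_less_mult_iff)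
  have "l *\<^sub>R \<alpha>' y = y"
    using inverse_left[of y] assms(3) C_linear_scaleR[OF lin'] by simp
  have "\<alpha>' y = inverse l *\<^sub>R (l *\<^sub>R \<alpha>' y)" using \<open>l > 0\<close> by simp
  also have "\<dots> = inverse l *\<^sub>R y" using \<open>l *\<^sub>R \<alpha>' y = y\<close> by (rule arg_cong)
  finally have "\<alpha>' y = inverse l *\<^sub>R y" .
  then show "inverse l ^ k *\<^sub>R y \<in> L" for k
    using eigenvector_powers_in_lattice[OF lin' closed' assms(1)] by blast
  show "l ^ k *\<^sub>R y \<in> L" for k
    by (rule eigenvector_powers_in_lattice[OF lin closed assms(1,3)])
qed

lemma not_scalar_on_basis: "\<exists>i<4. \<alpha> (b i) \<noteq> k *\<^sub>R b i"
proof (rule ccontr)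
  assume scalar: "\<not> ?thesis"
  have "\<alpha> v - k *\<^sub>R v = 0" for v
  proof (rule linear_eq_0_if_basis[where f = "\<lambda>v. \<alpha> v - k *\<^sub>R v"])
    show "linear (\<lambda>v. \<alpha> v - k *\<^sub>R v)"
      by (rule linearI) (simp_all add: C_linear_add[OF lin] C_linear_scaleR[OF lin] algebra_simps)
  qed (use scalar in auto)
  then have "\<alpha> v = k *\<^sub>R v" for v by simp
  moreover have "k = 1"
    using lattice_eigenvalue[OF basis_in_lattice[of 0] basis_nonzero[of 0]] calculation by simp
  ultimately show False using not_id by simp
qed

lemma matrix_not_scalar:
  defines "m i j \<equiv> coord j (\<alpha> (b i))"
  shows "\<exists>i<4. \<exists>j<4. i \<noteq> j \<and> m i j \<noteq> 0 \<or> m i i \<noteq> m j j"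
proof (rule ccontr)
  assume "\<not> ?thesis"
  then have "m i j = 0" "m i i = m j j" if "i < 4" "j < 4" "i \<noteq> j" for i j
    using that by blast+
  then have diag: "m i j *\<^sub>R b j = (if j = i then m 0 0 *\<^sub>R b i else 0)" if "i < 4" "j < 4" for i j
    using that by (cases "i = 0") auto
  have "\<alpha> (b i) = m 0 0 *\<^sub>R b i" if "i < 4" for i
  proof -
    have "\<alpha> (b i) = (\<Sum>j<4. m i j *\<^sub>R b j)" by (simp add: m_def sum_coord_basis)
    also have "\<dots> = (\<Sum>j<4. if j = i then m 0 0 *\<^sub>R b i else 0)"
      using diag[OF that] by (intro sum.cong) auto
    finally show ?thesis using that by simp
  qed
  then show False using not_scalar_on_basis by blast
qed

lemma coeffs_rational: "s \<in> \<rat> \<and> t \<in> \<rat>"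
proof -
  define m where "m i j = coord j (\<alpha> (b i))" for i j
  obtain i j where ij: "i < 4" "j < 4" "i \<noteq> j \<and> m i j \<noteq> 0 \<or> m i i \<noteq> m j j"
    using matrix_not_scalar unfolding m_def by blast
  show ?thesis
  proof (rule rational_coeffs_of_nonscalar_relation[where A = "\<lambda>i j. coord j (\<alpha> (\<alpha> (b i)))", OF _ _ ij])
    show "m i j \<in> \<rat> \<and> coord j (\<alpha> (\<alpha> (b i))) \<in> \<rat>" if "i < 4" "j < 4" for i j
    proof -
      have "\<alpha> (b i) \<in> L" "\<alpha> (\<alpha> (b i)) \<in> L" using closed basis_in_lattice[OF \<open>i < 4\<close>] by blast+
      then show ?thesis
        using \<open>j < 4\<close> Ints_subset_Rats unfolding m_def mem_lattice_iff_coord_Ints by blast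
    qed
    show "coord j (\<alpha> (\<alpha> (b i))) = s * m i j - (if i = j then t else 0)" if "i < 4" "j < 4" for i j
      using that by (simp add: m_def quadratic coord_diff coord_scaleR coord_basis)
  qed
qed

definition sqrt_disc :: "cvec \<Rightarrow> cvec" where
  "sqrt_disc v = 2 *\<^sub>R \<alpha> v - s *\<^sub>R v"

lemma C_linear_sqrt_disc: "C_linear sqrt_disc"
  using C_linear_lincomb[OF lin C_linear_id, of 2 "- s"] by (simp add: sqrt_disc_def[abs_def])

lemma sqrt_disc_squared: "sqrt_disc (sqrt_disc v) = (s\<^sup>2 - 4*t) *\<^sub>R v"
  unfolding sqrt_disc_def C_linear_diff[OF lin] C_linear_scaleR[OF lin] quadratic
  by (simp add: prod_eq_iff scaleR_conv_of_real power2_eq_square algebra_simps)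

lemma self_adjoint_sqrt_disc: "\<theta> (sqrt_disc x) y = \<theta> x (sqrt_disc y)"
  by (simp only: sqrt_disc_def hermitian_form_diff_left[OF herm] hermitian_form_diff_right[OF herm]
      hermitian_form_scaleR_left[OF herm] hermitian_form_scaleR_right[OF herm] self_adjoint)

lemma norm_sqrt_disc: "\<theta> (sqrt_disc v) (sqrt_disc v) = of_real (s\<^sup>2 - 4*t) * \<theta> v v"
  by (simp only: self_adjoint_sqrt_disc[symmetric] sqrt_disc_squared hermitian_form_scaleR_left[OF herm])

lemma discriminant_nonneg: "s\<^sup>2 - 4*t \<ge> 0"
proof (rule ccontr)
  assume neg: "\<not> ?thesis"
  have "Re (\<theta> (b 0) (b 0)) > 0"
    using positive_definiteD[OF pos basis_nonzero[of 0]] by simp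
  then have "Re (\<theta> (sqrt_disc (b 0)) (sqrt_disc (b 0))) < 0"
    using neg by (simp add: norm_sqrt_disc mult_neg_pos)
  moreover have "Re (\<theta> v v) \<ge> 0" for v
    using positive_definiteD[OF pos, of v] by (cases "v = 0") (auto simp: hermitian_form_zero_left[OF herm])
  ultimately show False by (meson not_le)
qed

lemma rational_root_eq_1:
  assumes "\<mu> \<in> \<rat>" "\<nu> \<in> \<rat>" "\<mu> + \<nu> = s" "\<mu> * \<nu> = t"
  shows "\<mu> = 1"
proof -
  obtain i where "i < 4" "\<alpha> (b i) \<noteq> \<nu> *\<^sub>R b i" using not_scalar_on_basis by blast
  obtain p q where "\<nu> = of_int p / of_int q" "q > 0" using assms(2) Rats_cases' by metis
  \<comment> \<open>\<open>\<alpha> - \<nu>\<close> maps into the \<open>\<mu>\<close>-eigenspace; clear the denominator of \<open>\<nu>\<close> to stay in \<open>L\<close>\<close>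
  define w where "w = \<alpha> (b i) - \<nu> *\<^sub>R b i"
  have "\<alpha> w = \<mu> *\<^sub>R w"
    unfolding w_def C_linear_diff[OF lin] C_linear_scaleR[OF lin] quadratic
    using assms(3,4)[symmetric] by (simp add: algebra_simps)
  define y where "y = of_int q *\<^sub>R w"
  have "y = of_int q *\<^sub>R \<alpha> (b i) - of_int p *\<^sub>R b i"
    using \<open>\<nu> = _\<close> \<open>q > 0\<close> by (simp add: y_def w_def scaleR_diff_right)
  then have "y \<in> L"
    using basis_in_lattice[OF \<open>i < 4\<close>] closed by (simp add: lattice_diff lattice_Ints_scaleR)
  moreover have "y \<noteq> 0" using \<open>q > 0\<close> \<open>\<alpha> (b i) \<noteq> _\<close> by (simp add: y_def w_def)
  moreover have "\<alpha> y = \<mu> *\<^sub>R y" using \<open>\<alpha> w = _\<close> by (simp add: y_def C_linear_scaleR[OF lin])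
  ultimately show ?thesis using lattice_eigenvalue by blast
qed

lemma discriminant_not_square: "\<not> (\<exists>r\<in>\<rat>. s\<^sup>2 - 4*t = r\<^sup>2)"
proof
  assume "\<exists>r\<in>\<rat>. s\<^sup>2 - 4*t = r\<^sup>2"
  then obtain r where r: "r \<in> \<rat>" "s\<^sup>2 - 4*t = r\<^sup>2" by blast
  have "s \<in> \<rat>" using coeffs_rational by simp
  have "(s + r)/2 = 1"
    by (rule rational_root_eq_1[of _ "(s - r)/2"])
      (use r \<open>s \<in> \<rat>\<close> in \<open>auto simp: field_simps power2_eq_square\<close>)
  moreover have "(s - r)/2 = 1"
    by (rule rational_root_eq_1[of _ "(s + r)/2"])
      (use r \<open>s \<in> \<rat>\<close> in \<open>auto simp: field_simps power2_eq_square\<close>)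
  ultimately have "s = 2" "r = 0" by simp_all
  then have "s\<^sup>2 - 4*t = 0" using r by simp
  have "sqrt_disc v = 0" for v
  proof (rule ccontr)
    assume "sqrt_disc v \<noteq> 0"
    then have "Re (\<theta> (sqrt_disc v) (sqrt_disc v)) > 0" by (rule positive_definiteD[OF pos])
    then show False using norm_sqrt_disc[of v] \<open>s\<^sup>2 - 4*t = 0\<close> by simp
  qed
  then have "\<alpha> v = v" for v using \<open>s = 2\<close> unfolding sqrt_disc_def by simp
  then show False using not_id by blast
qed

lemma real_multiplication: "real_multiplication L"
proof -
  obtain d q where "q \<noteq> 0" "of_int d = (of_int q)\<^sup>2 * (s\<^sup>2 - 4*t)" "d \<ge> 2"
    "\<not> (\<exists>c\<in>\<rat>. real_of_int d = c\<^sup>2)"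
    using rational_nonsquare_scaled_to_int coeffs_rational discriminant_nonneg discriminant_not_square
    by (metis Rats_diff Rats_mult Rats_number_of Rats_power)
  show ?thesis
  proof (rule real_multiplication_of_sqrt_map[where \<beta> = "\<lambda>v. of_int q *\<^sub>R sqrt_disc v"])
    show "C_linear (\<lambda>v. of_int q *\<^sub>R sqrt_disc v)"
      using C_linear_lincomb[OF C_linear_sqrt_disc C_linear_id, of "of_int q" 0] by simp
    show "of_int q *\<^sub>R sqrt_disc x \<in> latQ L" if "x \<in> latQ L" for x
      using that coeffs_rational unfolding sqrt_disc_def
      by (intro latQ_Rats_scaleR latQ_diff latQ_image[OF lin closed]) auto
    show "of_int q *\<^sub>R sqrt_disc (of_int q *\<^sub>R sqrt_disc v) = of_int d *\<^sub>R v" for v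
      using \<open>of_int d = _\<close>
      by (simp add: C_linear_scaleR[OF C_linear_sqrt_disc] sqrt_disc_squared power2_eq_square)
  qed fact+
qed

end

theorem lemma2:
  fixes L :: "cvec set" and \<theta> \<theta>' :: "cvec \<Rightarrow> cvec \<Rightarrow> complex"
  assumes "abelian_surface L"
    and "\<theta> \<in> NS L" and "\<theta>' \<in> NS L"
    and "principal_polarization L \<theta>" and "principal_polarization L \<theta>'"
    and "\<theta> \<noteq> \<theta>'"
  shows "real_multiplication L"
proof -
  obtain b where "lattice_basis L b"
    using assms(1) unfolding abelian_surface_def is_lattice_def lattice_basis_def by blast
  then interpret lattice_basis L b .
  have h: "hermitian_form \<theta>" "positive_definite \<theta>" "hermitian_form \<theta>'" "positive_definite \<theta>'"
    using assms(4,5) by (auto simp: principal_polarization_def polarization_def NS_def)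
  obtain \<alpha> s t where \<alpha>: "C_linear \<alpha>" "\<And>x y. \<theta>' x y = \<theta> (\<alpha> x) y"
    "\<And>x. \<alpha> (\<alpha> x) = s *\<^sub>R \<alpha> x - t *\<^sub>R x"
    using hermitian_form_relative_map[OF h(1,3,2)] by metis
  obtain \<alpha>' where \<alpha>': "C_linear \<alpha>'" "\<And>x y. \<theta> x y = \<theta>' (\<alpha>' x) y"
    using hermitian_form_relative_map[OF h(3,1,4)] by metis
  have "\<alpha> x \<in> L" if "x \<in> L" for x
    by (rule principal_polarization_relative_map_closed[OF assms(4,3) \<alpha>(2) that])
  moreover have "\<alpha>' x \<in> L" if "x \<in> L" for x
    by (rule principal_polarization_relative_map_closed[OF assms(5,2) \<alpha>'(2) that])
  ultimately interpret polarization_pair L b \<theta> \<theta>' \<alpha> \<alpha>' s t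
    using h \<alpha> \<alpha>' assms(6) by unfold_locales
  show ?thesis by (rule real_multiplication)
qed

end
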